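(* Let $a>1$, $d\ge 4$, and let $G$ be generated by the security model $\mathcal{S}(n,a,d)$. Let $\delta_1=\frac{10}{\log^{a-1}n}$ and $T_2=(1-\delta_1)n$. Then with probability $1-o(1)$ both of the following hold: (1) every homochromatic set whose seed node was created at a time step $\le T_2$ has size at least $\log n$; (2) every homochromatic set whose seed node was created at a time step $>T_2$ has size at most $30\log n$.
   Context: Security model $\mathcal{S}(n,a,d)$ (homophyly exponent $a$, natural number $d$): start with an initial graph $G_2$ on two nodes, each of which is a seed node with its own distinct color. For $i=3,\dots,n$, given $G_{i-1}$, let $p_i=(\log i)^{-a}$ and create a new node $v$ (at time step $i$). With probability $p_i$, $v$ receives a brand-new color $c$ and is called the seed node of $c$; then one edge $(v,u)$ is added with $u$ chosen with probability proportional to degrees in $G_{i-1}$, and $d-1$ edges $(v,u_j)$ are added, each $u_j$ chosen uniformly at random among all seed nodes of $G_{i-1}$. Otherwise, $v$ picks a color $c$ uniformly at random among all colors present in $G_{i-1}$, takes color $c$, and $d$ edges $(v,u_j)$ are added, each $u_j$ chosen with probability proportional to degree among the nodes of color $c$ in $G_{i-1}$. The network is $G=G_n$. A homochromatic set is the set of all nodes of $G$ of one color; it is created at the time step its seed node is created. *)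

theory Defs
  imports "HOL-Probability.Probability"
begin

text \<open>Nodes are the natural numbers 1..i (node v is created at
time step v).  A color is identified with (the index of) its seed node, so the seed nodes of a
state at time i are exactly the nodes v in 1..i with col v = v.  The graph is a multigraph given
by the multiset of its edges; degree-proportional choice is uniform choice from the multiset of
edge endpoints (each node occurs there as often as its degree).\<close>

type_synonym sstate = "(nat \<Rightarrow> nat) \<times> (nat \<times> nat) multiset"

definition endpoints :: "(nat \<times> nat) multiset \<Rightarrow> nat multiset" where
  "endpoints E = sum_mset (image_mset (\<lambda>(x, y). {#x, y#}) E)"

definition seeds :: "nat \<Rightarrow> (nat \<Rightarrow> nat) \<Rightarrow> nat set" where
  "seeds i col = {v \<in> {1..i}. col v = v}"

definition sec_p :: "real \<Rightarrow> nat \<Rightarrow> real" where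
  "sec_p a i = (ln (real i)) powr (- a)"

definition sec_init :: sstate where
  "sec_init = ((\<lambda>x. x), {#(1, 2)#})"

definition sec_step :: "real \<Rightarrow> nat \<Rightarrow> nat \<Rightarrow> sstate \<Rightarrow> sstate pmf" where
  "sec_step a d i s = (case s of (col, E) \<Rightarrow>
     bind_pmf (bernoulli_pmf (sec_p a i)) (\<lambda>b.
       if b then
         bind_pmf (pmf_of_multiset (endpoints E)) (\<lambda>u.
         bind_pmf (replicate_pmf (d - 1) (pmf_of_set (seeds (i - 1) col))) (\<lambda>us.
           return_pmf (col(i := i), E + {#(i, u)#} + mset (map (\<lambda>w. (i, w)) us))))
       else
         bind_pmf (pmf_of_set (seeds (i - 1) col)) (\<lambda>c.
         bind_pmf (replicate_pmf d
                     (pmf_of_multiset (filter_mset (\<lambda>x. col x = c) (endpoints E)))) (\<lambda>us.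
           return_pmf (col(i := c), E + mset (map (\<lambda>w. (i, w)) us))))))"

fun sec_model :: "real \<Rightarrow> nat \<Rightarrow> nat \<Rightarrow> sstate pmf" where
  "sec_model a d 0 = return_pmf sec_init"
| "sec_model a d (Suc m) =
     (if Suc m \<le> 2 then return_pmf sec_init
      else bind_pmf (sec_model a d m) (sec_step a d (Suc m)))"

definition homochromatic :: "nat \<Rightarrow> (nat \<Rightarrow> nat) \<Rightarrow> nat \<Rightarrow> nat set" where
  "homochromatic n col c = {v \<in> {1..n}. col v = c}"

definition delta1 :: "real \<Rightarrow> nat \<Rightarrow> real" where
  "delta1 a n = 10 / (ln (real n)) powr (a - 1)"

definition T2 :: "real \<Rightarrow> nat \<Rightarrow> real" where
  "T2 a n = (1 - delta1 a n) * real n"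

definition lemma4_event :: "real \<Rightarrow> nat \<Rightarrow> sstate set" where
  "lemma4_event a n = {(col, E).
     (\<forall>c \<in> seeds n col. real c \<le> T2 a n \<longrightarrow> real (card (homochromatic n col c)) \<ge> ln (real n)) \<and>
     (\<forall>c \<in> seeds n col. real c > T2 a n \<longrightarrow> real (card (homochromatic n col c)) \<le> 30 * ln (real n))}"

end

theory Submission
  imports Defs "HOL-Real_Asymp.Real_Asymp"
begin

text \<open>Only the colours matter, and forgetting the edges turns the model into a Markov chain on
  colourings. Let Y = n / log^a n. Exponential-moment (Chernoff) bounds show that with high
  probability there are at most 2Y colours at time n and at least 3Y/4 colours already at time T2.
  During each of the roughly 10 Y log n steps after T2, a fixed colour is then taken with
  probability at least (1 - p_i)/2Y, so an old colour class gains at least log n nodes, but with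
  probability at most 4/3Y, so a young class gains at most 30 log n nodes; both again by
  exponential-moment bounds for the class sizes, which are supermartingale arguments along the
  chain. A union bound over the at most n colours finishes the proof.\<close>

section \<open>Expectations under finitely supported distributions\<close>

lemma expectation_bind_pmf_finite:
  fixes h :: "'b \<Rightarrow> real"
  assumes "finite (set_pmf M)" "\<And>x. x \<in> set_pmf M \<Longrightarrow> finite (set_pmf (f x))"
  shows "measure_pmf.expectation (bind_pmf M f) h =
         measure_pmf.expectation M (\<lambda>x. measure_pmf.expectation (f x) h)"
proof -
  have "measure_pmf.expectation (bind_pmf M f) h =
        (\<Sum>x\<in>set_pmf M. pmf M x *\<^sub>R measure_pmf.expectation (f x) h)"
    using assms by (intro pmf_expectation_bind) auto
  also have "\<dots> = measure_pmf.expectation M (\<lambda>x. measure_pmf.expectation (f x) h)"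
    using assms by (subst integral_measure_pmf[of "set_pmf M"]) auto
  finally show ?thesis .
qed

lemma expectation_pmf_cong:
  fixes f g :: "'a \<Rightarrow> real"
  shows "(\<And>x. x \<in> set_pmf M \<Longrightarrow> f x = g x) \<Longrightarrow>
    measure_pmf.expectation M f = measure_pmf.expectation M g"
  by (intro integral_cong_AE) (auto simp: AE_measure_pmf_iff)

lemma expectation_pmf_mono:
  fixes f g :: "'a \<Rightarrow> real"
  assumes "finite (set_pmf M)" "\<And>x. x \<in> set_pmf M \<Longrightarrow> f x \<le> g x"
  shows "measure_pmf.expectation M f \<le> measure_pmf.expectation M g"
  using assms
  by (intro integral_mono_AE) (auto simp: AE_measure_pmf_iff integrable_measure_pmf_finite)

lemma prob_le_expectation_pmf:
  fixes f :: "'a \<Rightarrow> real"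
  assumes "finite (set_pmf M)" "\<And>x. x \<in> A \<Longrightarrow> 1 \<le> f x" "\<And>x. 0 \<le> f x"
  shows "measure_pmf.prob M A \<le> measure_pmf.expectation M f"
proof -
  have "measure_pmf.prob M A = measure_pmf.expectation M (indicator A)"
    by simp
  also have "\<dots> \<le> measure_pmf.expectation M f"
    using assms by (intro expectation_pmf_mono) (auto simp: indicator_def)
  finally show ?thesis .
qed

section \<open>The colouring process\<close>

definition colour_step :: "real \<Rightarrow> nat \<Rightarrow> (nat \<Rightarrow> nat) \<Rightarrow> (nat \<Rightarrow> nat) pmf" where
  "colour_step a i col = bind_pmf (bernoulli_pmf (sec_p a i)) (\<lambda>b.
     if b then return_pmf (col(i := i))
     else bind_pmf (pmf_of_set (seeds (i - 1) col)) (\<lambda>c. return_pmf (col(i := c))))"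

fun colour_model :: "real \<Rightarrow> nat \<Rightarrow> (nat \<Rightarrow> nat) pmf" where
  "colour_model a 0 = return_pmf (\<lambda>x. x)"
| "colour_model a (Suc m) =
     (if Suc m \<le> 2 then return_pmf (\<lambda>x. x)
      else bind_pmf (colour_model a m) (colour_step a (Suc m)))"

lemma map_fst_sec_step: "map_pmf fst (sec_step a d i s) = colour_step a i (fst s)"
  by (cases s) (simp add: sec_step_def colour_step_def map_bind_pmf if_distrib cong: if_cong)

lemma map_fst_sec_model: "map_pmf fst (sec_model a d n) = colour_model a n"
  by (induction n) (simp_all add: sec_init_def map_bind_pmf map_fst_sec_step bind_map_pmf[symmetric])

lemma finite_seeds [simp]: "finite (seeds i col)"
  by (simp add: seeds_def)

lemma seeds_fun_upd_less: "j < i \<Longrightarrow> seeds j (col(i := x)) = seeds j col"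
  by (auto simp: seeds_def)

lemma card_seeds_mono: "j \<le> i \<Longrightarrow> card (seeds j col) \<le> card (seeds i col)"
  unfolding seeds_def by (rule card_mono) auto

lemma card_seeds_fun_upd:
  assumes "1 \<le> i"
  shows "card (seeds i (col(i := x))) = card (seeds (i - 1) col) + of_bool (x = i)"
proof -
  have "seeds i (col(i := x)) = (if x = i then insert i (seeds (i - 1) col) else seeds (i - 1) col)"
    using assms by (auto simp: seeds_def)
  moreover have "i \<notin> seeds (i - 1) col"
    by (auto simp: seeds_def)
  ultimately show ?thesis by simp
qed

lemma card_homochromatic_fun_upd:
  assumes "1 \<le> i"
  shows "card (homochromatic i (col(i := x)) c) = card (homochromatic (i - 1) col c) + of_bool (x = c)"
proof -
  have "homochromatic i (col(i := x)) c =
        (if x = c then insert i (homochromatic (i - 1) col c) else homochromatic (i - 1) col c)"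
    using assms by (auto simp: homochromatic_def)
  moreover have "i \<notin> homochromatic (i - 1) col c"
    by (auto simp: homochromatic_def)
  ultimately show ?thesis by (simp add: homochromatic_def)
qed

lemma seeds_nonempty: "1 \<le> i \<Longrightarrow> col 1 = 1 \<Longrightarrow> seeds i col \<noteq> {}"
  by (auto simp: seeds_def)

text \<open>Node 1 always keeps its own colour, so the uniform choice of an existing colour is never
  made from the empty set of seeds (where pmf_of_set is a junk value).\<close>
definition admissible_colouring :: "(nat \<Rightarrow> nat) \<Rightarrow> bool" where
  "admissible_colouring col \<longleftrightarrow> col 1 = 1 \<and> (\<forall>v. col v \<le> v)"

lemma homochromatic_eq_empty:
  "admissible_colouring col \<Longrightarrow> m < c \<Longrightarrow> homochromatic m col c = {}"
  by (auto simp: admissible_colouring_def homochromatic_def) (metis le_trans leD)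

lemma set_pmf_colour_step:
  assumes "2 \<le> i" "col 1 = 1"
  shows "set_pmf (colour_step a i col) \<subseteq> (\<lambda>c. col(i := c)) ` insert i (seeds (i - 1) col)"
  using assms seeds_nonempty[of "i - 1" col] by (auto simp: colour_step_def split: if_splits)

lemma colour_step_fun_upd:
  assumes "2 \<le> i" "col 1 = 1" "col' \<in> set_pmf (colour_step a i col)"
  shows "\<exists>x. col' = col(i := x)"
  using set_pmf_colour_step[of i col a] assms by blast

lemma colour_step_support_finite:
  "2 \<le> i \<Longrightarrow> col 1 = 1 \<Longrightarrow> finite (set_pmf (colour_step a i col))"
  by (rule finite_subset[OF set_pmf_colour_step]) simp_all

lemma admissible_colouring_colour_step:
  assumes "2 \<le> i" "admissible_colouring col" "col' \<in> set_pmf (colour_step a i col)"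
  shows "admissible_colouring col'"
proof -
  have "col 1 = 1" using assms(2) by (simp add: admissible_colouring_def)
  then obtain c where "c \<in> insert i (seeds (i - 1) col)" "col' = col(i := c)"
    using set_pmf_colour_step[of i col a] assms(1,3) by blast
  moreover from this(1) have "c \<le> i" by (auto simp: seeds_def)
  ultimately show ?thesis using assms(1,2) by (auto simp: admissible_colouring_def)
qed

lemma colour_model_support:
  "(\<forall>col \<in> set_pmf (colour_model a n). admissible_colouring col) \<and> finite (set_pmf (colour_model a n))"
proof (induction n)
  case (Suc n)
  show ?case
  proof (cases "Suc n \<le> 2")
    case False
    then have "2 \<le> Suc n" by simp
    have "finite (set_pmf (colour_step a (Suc n) col))" if "col \<in> set_pmf (colour_model a n)" for col
      using that Suc.IH colour_step_support_finite[OF \<open>2 \<le> Suc n\<close>]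
      by (auto simp: admissible_colouring_def)
    then show ?thesis
      using False Suc.IH admissible_colouring_colour_step[OF \<open>2 \<le> Suc n\<close>] by auto
  qed (simp add: admissible_colouring_def)
qed (simp add: admissible_colouring_def)

lemma admissible_colouring_colour_model:
  "col \<in> set_pmf (colour_model a n) \<Longrightarrow> admissible_colouring col"
  using colour_model_support by blast

lemma colour_model_support_finite: "finite (set_pmf (colour_model a n))"
  using colour_model_support by blast

lemma expectation_colour_model_Suc:
  fixes h :: "(nat \<Rightarrow> nat) \<Rightarrow> real"
  assumes "2 \<le> m"
  shows "measure_pmf.expectation (colour_model a (Suc m)) h =
         measure_pmf.expectation (colour_model a m)
           (\<lambda>col. measure_pmf.expectation (colour_step a (Suc m) col) h)"
proof -
  have "finite (set_pmf (colour_step a (Suc m) col))" if "col \<in> set_pmf (colour_model a m)" for col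
    using that admissible_colouring_colour_model colour_step_support_finite assms
    by (auto simp: admissible_colouring_def)
  then show ?thesis
    using assms colour_model_support_finite by (simp add: expectation_bind_pmf_finite)
qed

section \<open>One step of the colouring process\<close>

lemma sec_p_nonneg: "0 \<le> sec_p a i"
  by (simp add: sec_p_def)

lemma one_le_ln_nat: "3 \<le> i \<Longrightarrow> 1 \<le> ln (real i)"
  using exp_le ln_ge_iff[of "real i" 1] by simp

lemma sec_p_le_1:
  assumes "0 < a" "3 \<le> i"
  shows "sec_p a i \<le> 1"
proof -
  have "ln (real i) powr (- a) \<le> ln (real i) powr 0"
    using assms one_le_ln_nat[OF assms(2)] by (intro powr_mono) auto
  then show ?thesis using one_le_ln_nat[OF assms(2)] by (simp add: sec_p_def)
qed

lemma expectation_colour_step: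
  fixes h :: "(nat \<Rightarrow> nat) \<Rightarrow> real"
  assumes "0 < a" "3 \<le> i" "col 1 = 1"
  defines "S \<equiv> seeds (i - 1) col"
  shows "measure_pmf.expectation (colour_step a i col) h =
     sec_p a i * h (col(i := i)) + (1 - sec_p a i) * ((\<Sum>c\<in>S. h (col(i := c))) / card S)"
proof -
  have "S \<noteq> {}" using seeds_nonempty[of "i - 1" col] assms by simp
  then have "measure_pmf.expectation (bind_pmf (pmf_of_set S) (\<lambda>c. return_pmf (col(i := c)))) h
          = (\<Sum>c\<in>S. h (col(i := c))) / card S"
    by (simp add: integral_pmf_of_set map_pmf_def[symmetric] S_def)
  moreover have "finite (set_pmf (if b then return_pmf (col(i := i))
      else bind_pmf (pmf_of_set S) (\<lambda>c. return_pmf (col(i := c)))))" for b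
    using \<open>S \<noteq> {}\<close> by (auto simp: S_def)
  ultimately show ?thesis
    using sec_p_nonneg[of a i] sec_p_le_1[OF assms(1,2)]
    unfolding colour_step_def S_def
    by (subst expectation_bind_pmf_finite) (auto simp: mult.commute)
qed

definition join_prob :: "real \<Rightarrow> nat \<Rightarrow> (nat \<Rightarrow> nat) \<Rightarrow> nat \<Rightarrow> real" where
  "join_prob a i col c = sec_p a i * of_bool (c = i) +
     (1 - sec_p a i) * of_bool (c \<in> seeds (i - 1) col) / card (seeds (i - 1) col)"

lemma expectation_exp_card_seeds_step:
  fixes t :: real
  assumes "0 < a" "3 \<le> i" "col 1 = 1"
  shows "measure_pmf.expectation (colour_step a i col) (\<lambda>col'. exp (t * card (seeds i col'))) =
         exp (t * card (seeds (i - 1) col)) * (1 + (exp t - 1) * sec_p a i)"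
proof -
  let ?S = "seeds (i - 1) col" and ?x = "exp (t * card (seeds (i - 1) col))"
  have "?S \<noteq> {}" using seeds_nonempty[of "i - 1" col] assms by simp
  have "c \<noteq> i" if "c \<in> ?S" for c
    using that by (auto simp: seeds_def)
  then have "(\<Sum>c\<in>?S. exp (t * card (seeds i (col(i := c))))) / card ?S = ?x"
    using assms(2) \<open>?S \<noteq> {}\<close> by (simp add: card_seeds_fun_upd)
  moreover have "exp (t * card (seeds i (col(i := i)))) = ?x * exp t"
    using assms(2) by (simp add: card_seeds_fun_upd distrib_left exp_add)
  ultimately show ?thesis
    using assms by (simp only: expectation_colour_step) (simp add: algebra_simps)
qed

lemma expectation_exp_card_homochromatic_step:
  fixes q :: real
  assumes "0 < a" "3 \<le> i" "col 1 = 1"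
  shows "measure_pmf.expectation (colour_step a i col)
           (\<lambda>col'. exp (q * card (homochromatic i col' c))) =
         exp (q * card (homochromatic (i - 1) col c)) * (1 + (exp q - 1) * join_prob a i col c)"
proof -
  let ?S = "seeds (i - 1) col" and ?x = "exp (q * card (homochromatic (i - 1) col c))"
  have "?S \<noteq> {}" using seeds_nonempty[of "i - 1" col] assms by simp
  have upd: "exp (q * card (homochromatic i (col(i := s)) c)) = ?x + ?x * (exp q - 1) * of_bool (s = c)"
    for s
    using assms(2) by (simp add: card_homochromatic_fun_upd distrib_left exp_add algebra_simps)
  then have "(\<Sum>s\<in>?S. exp (q * card (homochromatic i (col(i := s)) c))) / card ?S =
             ?x + ?x * (exp q - 1) * of_bool (c \<in> ?S) / card ?S"
    using \<open>?S \<noteq> {}\<close>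
    by (simp add: sum.distrib sum_distrib_left[symmetric] of_bool_def add_divide_distrib)
  with assms upd[of i] show ?thesis
    by (simp only: expectation_colour_step) (simp add: join_prob_def algebra_simps)
qed

lemma join_prob_le:
  fixes \<kappa> :: real
  assumes "0 < a" "3 \<le> i" "0 < \<kappa>" "\<kappa> \<le> card (seeds (i - 1) col)" "c \<noteq> i"
  shows "join_prob a i col c \<le> 1 / \<kappa>"
proof -
  have "(1 - sec_p a i) * of_bool (c \<in> seeds (i - 1) col) \<le> 1"
    using sec_p_nonneg[of a i] by (simp add: of_bool_def)
  then show ?thesis
    using assms sec_p_le_1[OF assms(1,2)] by (simp add: join_prob_def frac_le)
qed

lemma join_prob_ge:
  fixes \<kappa> :: real
  assumes "0 < a" "3 \<le> i" "c \<in> seeds (i - 1) col" "card (seeds (i - 1) col) \<le> \<kappa>"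
  shows "(1 - sec_p a i) / \<kappa> \<le> join_prob a i col c"
proof -
  have "0 < card (seeds (i - 1) col)"
    using assms(3) card_gt_0_iff by fastforce
  then have "(1 - sec_p a i) / \<kappa> \<le> (1 - sec_p a i) / card (seeds (i - 1) col)"
    using assms sec_p_le_1[OF assms(1,2)] by (intro divide_left_mono) auto
  then show ?thesis
    using assms(3) sec_p_nonneg[of a i] by (simp add: join_prob_def)
qed

lemma one_plus_join_prob_le:
  fixes l \<kappa> :: real
  assumes "0 < a" "3 \<le> i" "0 \<le> l" "0 < \<kappa>" "\<kappa> \<le> card (seeds (i - 1) col)"
  shows "1 + (exp l - 1) * join_prob a i col c \<le> exp (l * of_bool (c = i) + (exp l - 1) / \<kappa>)"
proof (cases "c = i")
  case True
  then have "join_prob a i col c = sec_p a i"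
    by (simp add: join_prob_def seeds_def)
  then have "1 + (exp l - 1) * join_prob a i col c \<le> exp l"
    using assms sec_p_le_1[OF assms(1,2)] mult_left_le[of "sec_p a i" "exp l - 1"] by simp
  moreover have "exp l \<le> exp (l * of_bool (c = i) + (exp l - 1) / \<kappa>)"
    using True assms(3,4) by simp
  ultimately show ?thesis by linarith
next
  case False
  have "(exp l - 1) * join_prob a i col c \<le> (exp l - 1) / \<kappa>"
    using join_prob_le[OF assms(1,2,4,5) False] assms(3) mult_left_mono[of _ "1 / \<kappa>" "exp l - 1"]
    by simp
  moreover have "1 + (exp l - 1) / \<kappa> \<le> exp ((exp l - 1) / \<kappa>)"
    by (rule exp_ge_add_one_self)
  moreover have "l * of_bool (c = i) + (exp l - 1) / \<kappa> = (exp l - 1) / \<kappa>"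
    using False by simp
  ultimately show ?thesis by (metis order_trans add_left_mono)
qed

lemma one_plus_join_prob_le_neg:
  fixes l \<kappa> :: real
  assumes "0 < a" "3 \<le> i" "0 \<le> l" "c \<in> seeds (i - 1) col" "card (seeds (i - 1) col) \<le> \<kappa>"
  shows "1 + (exp (- l) - 1) * join_prob a i col c \<le> exp (- (1 - exp (- l)) * (1 - sec_p a i) / \<kappa>)"
proof -
  have "(exp (- l) - 1) * join_prob a i col c \<le> (exp (- l) - 1) * ((1 - sec_p a i) / \<kappa>)"
    using join_prob_ge[OF assms(1,2,4,5)] assms(3) by (intro mult_left_mono_neg) auto
  moreover have "1 + (exp (- l) - 1) * ((1 - sec_p a i) / \<kappa>) \<le>
                 exp (- (1 - exp (- l)) * (1 - sec_p a i) / \<kappa>)"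
    using exp_ge_add_one_self[of "(exp (- l) - 1) * ((1 - sec_p a i) / \<kappa>)"] by (simp add: algebra_simps)
  ultimately show ?thesis by linarith
qed

section \<open>Exponential moments\<close>

lemma expectation_colour_model_le_exp_sum:
  fixes f :: "nat \<Rightarrow> (nat \<Rightarrow> nat) \<Rightarrow> real" and h :: "nat \<Rightarrow> real"
  assumes "2 \<le> m" "m \<le> n"
    and step: "\<And>i col. m \<le> i \<Longrightarrow> i < n \<Longrightarrow> col \<in> set_pmf (colour_model a i) \<Longrightarrow>
       measure_pmf.expectation (colour_step a (Suc i) col) (f (Suc i)) \<le> f i col * exp (h (Suc i))"
  shows "measure_pmf.expectation (colour_model a n) (f n) \<le>
         measure_pmf.expectation (colour_model a m) (f m) * exp (\<Sum>i\<in>{m<..n}. h i)"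
  using assms(2,3)
proof (induction n rule: nat_induct_at_least)
  case (Suc n)
  have "measure_pmf.expectation (colour_model a (Suc n)) (f (Suc n)) =
        measure_pmf.expectation (colour_model a n)
          (\<lambda>col. measure_pmf.expectation (colour_step a (Suc n) col) (f (Suc n)))"
    using assms(1) Suc.hyps by (intro expectation_colour_model_Suc) simp
  also have "\<dots> \<le> measure_pmf.expectation (colour_model a n) (\<lambda>col. f n col * exp (h (Suc n)))"
    using Suc.prems Suc.hyps by (intro expectation_pmf_mono colour_model_support_finite) simp
  also have "\<dots> = measure_pmf.expectation (colour_model a n) (f n) * exp (h (Suc n))"
    by simp
  also have "\<dots> \<le> measure_pmf.expectation (colour_model a m) (f m) *
                   exp (\<Sum>i\<in>{m<..n}. h i) * exp (h (Suc n))"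
    using Suc.IH Suc.prems by (intro mult_right_mono) simp_all
  also have "\<dots> = measure_pmf.expectation (colour_model a m) (f m) * exp (\<Sum>i\<in>{m<..Suc n}. h i)"
  proof -
    have "{m<..Suc n} = insert (Suc n) {m<..n}" using Suc.hyps by auto
    then show ?thesis by (simp add: exp_add[symmetric] add.commute)
  qed
  finally show ?case .
qed simp

lemma expectation_colour_model_le_exp_sum_from_le_1:
  fixes f :: "nat \<Rightarrow> (nat \<Rightarrow> nat) \<Rightarrow> real" and h :: "nat \<Rightarrow> real"
  assumes "2 \<le> m" "m \<le> n"
    and "\<And>col. col \<in> set_pmf (colour_model a m) \<Longrightarrow> f m col \<le> 1"
    and "\<And>i col. m \<le> i \<Longrightarrow> i < n \<Longrightarrow> col \<in> set_pmf (colour_model a i) \<Longrightarrow>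
       measure_pmf.expectation (colour_step a (Suc i) col) (f (Suc i)) \<le> f i col * exp (h (Suc i))"
  shows "measure_pmf.expectation (colour_model a n) (f n) \<le> exp (\<Sum>i\<in>{m<..n}. h i)"
proof -
  have "measure_pmf.expectation (colour_model a m) (f m) \<le>
        measure_pmf.expectation (colour_model a m) (\<lambda>_. 1)"
    using assms(3) by (intro expectation_pmf_mono colour_model_support_finite)
  then have "measure_pmf.expectation (colour_model a m) (f m) * exp (\<Sum>i\<in>{m<..n}. h i)
             \<le> exp (\<Sum>i\<in>{m<..n}. h i)"
    using mult_right_mono[of _ 1 "exp (\<Sum>i\<in>{m<..n}. h i)"] by simp
  then show ?thesis
    using expectation_colour_model_le_exp_sum[OF assms(1,2,4)] by linarith
qed

lemma expectation_colour_model_past: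
  fixes f :: "(nat \<Rightarrow> nat) \<Rightarrow> real"
  assumes "2 \<le> m" "m \<le> n" "\<And>col i x. m < i \<Longrightarrow> f (col(i := x)) = f col"
  shows "measure_pmf.expectation (colour_model a n) f = measure_pmf.expectation (colour_model a m) f"
proof -
  have step: "measure_pmf.expectation (colour_step a (Suc i) col) g \<le> g col * exp 0"
    if "m \<le> i" "col \<in> set_pmf (colour_model a i)" "g = f \<or> g = (\<lambda>col. - f col)" for i col g
  proof -
    have "col 1 = 1"
      using admissible_colouring_colour_model[OF that(2)] by (simp add: admissible_colouring_def)
    have "g col' = g col" if col': "col' \<in> set_pmf (colour_step a (Suc i) col)" for col'
    proof -
      obtain x where "col' = col(Suc i := x)"
        using colour_step_fun_upd[of "Suc i" col col' a] \<open>col 1 = 1\<close> col' assms(1) \<open>m \<le> i\<close> by auto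
      then show ?thesis using \<open>m \<le> i\<close> \<open>g = f \<or> g = (\<lambda>col. - f col)\<close> assms(3) by auto
    qed
    then have "measure_pmf.expectation (colour_step a (Suc i) col) g =
               measure_pmf.expectation (colour_step a (Suc i) col) (\<lambda>_. g col)"
      by (intro expectation_pmf_cong)
    then show ?thesis by simp
  qed
  show ?thesis
    using expectation_colour_model_le_exp_sum[OF assms(1,2), where f = "\<lambda>_. f" and h = "\<lambda>_. 0"]
      expectation_colour_model_le_exp_sum[OF assms(1,2), where f = "\<lambda>_ col. - f col" and h = "\<lambda>_. 0"]
      step
    by fastforce
qed

lemma expectation_exp_card_seeds_le:
  fixes t :: real
  assumes "0 < a" "2 \<le> n"
  shows "measure_pmf.expectation (colour_model a n) (\<lambda>col. exp (t * card (seeds n col)))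
     \<le> exp (2 * t + (exp t - 1) * (\<Sum>j\<in>{2<..n}. sec_p a j))"
proof -
  have "measure_pmf.expectation (colour_step a (Suc i) col) (\<lambda>col'. exp (t * card (seeds (Suc i) col')))
        \<le> exp (t * card (seeds i col)) * exp ((exp t - 1) * sec_p a (Suc i))"
    if "2 \<le> i" "col \<in> set_pmf (colour_model a i)" for i col
  proof -
    have "col 1 = 1"
      using admissible_colouring_colour_model[OF that(2)] by (simp add: admissible_colouring_def)
    then show ?thesis
      using that assms(1) exp_ge_add_one_self[of "(exp t - 1) * sec_p a (Suc i)"]
      by (simp add: expectation_exp_card_seeds_step del: exp_ge_add_one_self)
  qed
  then have "measure_pmf.expectation (colour_model a n) (\<lambda>col. exp (t * card (seeds n col)))
      \<le> measure_pmf.expectation (colour_model a 2) (\<lambda>col. exp (t * card (seeds 2 col))) *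
        exp (\<Sum>j\<in>{2<..n}. (exp t - 1) * sec_p a j)"
    using assms(2) by (intro expectation_colour_model_le_exp_sum[where f = "\<lambda>i col. exp (t * card (seeds i col))"]) auto
  moreover have "seeds 2 (\<lambda>x. x) = {1, 2}"
    by (auto simp: seeds_def)
  ultimately show ?thesis
    by (simp add: numeral_2_eq_2 sum_distrib_left exp_add mult.commute)
qed

lemma expectation_exp_card_homochromatic_step_le:
  fixes l \<kappa> :: real
  assumes "0 < a" "2 \<le> m" "m \<le> i" "0 \<le> l" "0 < \<kappa>" "col 1 = 1"
  shows "measure_pmf.expectation (colour_step a (Suc i) col)
           (\<lambda>col'. exp (l * card (homochromatic (Suc i) col' c)) * of_bool (\<kappa> \<le> card (seeds m col')))
         \<le> exp (l * card (homochromatic i col c)) * of_bool (\<kappa> \<le> card (seeds m col)) *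
           exp (l * of_bool (c = Suc i) + (exp l - 1) / \<kappa>)"
proof -
  let ?ind = "of_bool (\<kappa> \<le> card (seeds m col)) :: real"
  have "seeds m col' = seeds m col" if "col' \<in> set_pmf (colour_step a (Suc i) col)" for col'
    using colour_step_fun_upd[OF _ assms(6) that] assms(2,3) by (auto simp: seeds_fun_upd_less)
  then have "measure_pmf.expectation (colour_step a (Suc i) col)
           (\<lambda>col'. exp (l * card (homochromatic (Suc i) col' c)) * of_bool (\<kappa> \<le> card (seeds m col')))
         = measure_pmf.expectation (colour_step a (Suc i) col)
           (\<lambda>col'. exp (l * card (homochromatic (Suc i) col' c)) * ?ind)"
    by (intro expectation_pmf_cong) simp
  also have "\<dots> = exp (l * card (homochromatic i col c)) *
                   (1 + (exp l - 1) * join_prob a (Suc i) col c) * ?ind"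
    using assms by (simp add: expectation_exp_card_homochromatic_step)
  also have "\<dots> \<le> exp (l * card (homochromatic i col c)) * ?ind *
                   exp (l * of_bool (c = Suc i) + (exp l - 1) / \<kappa>)"
  proof (cases "\<kappa> \<le> card (seeds m col)")
    case True
    then have "\<kappa> \<le> card (seeds i col)"
      using card_seeds_mono[OF assms(3), of col] by linarith
    then show ?thesis
      using True assms one_plus_join_prob_le[of a "Suc i" l \<kappa> col c] by simp
  qed simp
  finally show ?thesis .
qed

lemma expectation_exp_card_homochromatic_le:
  fixes l \<kappa> :: real
  assumes "0 < a" "2 \<le> m" "m < c" "m \<le> n" "0 \<le> l" "0 < \<kappa>"
  shows "measure_pmf.expectation (colour_model a n)
           (\<lambda>col. exp (l * card (homochromatic n col c)) * of_bool (\<kappa> \<le> card (seeds m col)))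
         \<le> exp (l + (exp l - 1) * real (n - m) / \<kappa>)"
proof -
  let ?f = "\<lambda>i col. exp (l * card (homochromatic i col c)) * of_bool (\<kappa> \<le> card (seeds m col))"
  let ?h = "\<lambda>i. l * of_bool (c = i) + (exp l - 1) / \<kappa>"
  have "measure_pmf.expectation (colour_model a n) (?f n) \<le> exp (\<Sum>i\<in>{m<..n}. ?h i)"
  proof (rule expectation_colour_model_le_exp_sum_from_le_1[OF assms(2,4)])
    show "?f m col \<le> 1" if "col \<in> set_pmf (colour_model a m)" for col
      using homochromatic_eq_empty[OF admissible_colouring_colour_model[OF that] assms(3)] by simp
    show "measure_pmf.expectation (colour_step a (Suc i) col) (?f (Suc i)) \<le> ?f i col * exp (?h (Suc i))"
      if "m \<le> i" "col \<in> set_pmf (colour_model a i)" for i col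
      using admissible_colouring_colour_model[OF that(2)] assms that(1)
      by (intro expectation_exp_card_homochromatic_step_le) (auto simp: admissible_colouring_def)
  qed
  also have "\<dots> \<le> exp (l + (exp l - 1) * real (n - m) / \<kappa>)"
  proof -
    have "{m<..n} \<inter> {i. c = i} \<subseteq> {c}" by auto
    then have "(\<Sum>i\<in>{m<..n}. l * of_bool (c = i)) \<le> l"
      using assms(5) by (cases "c \<in> {m<..n}") (auto simp: Int_absorb2)
    then show ?thesis by (simp add: sum.distrib mult.commute)
  qed
  finally show ?thesis .
qed

lemma expectation_exp_neg_card_homochromatic_step_le:
  fixes l \<kappa> :: real
  assumes "0 < a" "2 \<le> m" "m \<le> i" "1 \<le> c" "c \<le> m" "0 \<le> l" "col 1 = 1"
  defines "ind \<equiv> \<lambda>i col. of_bool (card (seeds i col) \<le> \<kappa>) * of_bool (col c = c) :: real"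
  shows "measure_pmf.expectation (colour_step a (Suc i) col)
           (\<lambda>col'. exp (- l * card (homochromatic (Suc i) col' c)) * ind (Suc i) col')
         \<le> exp (- l * card (homochromatic i col c)) * ind i col *
           exp (- (1 - exp (- l)) * (1 - sec_p a (Suc i)) / \<kappa>)"
proof -
  have "ind (Suc i) col' \<le> ind i col" if col': "col' \<in> set_pmf (colour_step a (Suc i) col)" for col'
  proof -
    obtain x where x: "col' = col(Suc i := x)"
      using colour_step_fun_upd[OF _ assms(7) col'] assms(2,3) by auto
    then have "card (seeds i col) \<le> card (seeds (Suc i) col')"
      by (simp add: card_seeds_fun_upd)
    moreover have "col' c = col c"
      using x assms(3,5) by simp
    ultimately show ?thesis by (auto simp: ind_def)
  qed
  then have "measure_pmf.expectation (colour_step a (Suc i) col)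
           (\<lambda>col'. exp (- l * card (homochromatic (Suc i) col' c)) * ind (Suc i) col')
      \<le> measure_pmf.expectation (colour_step a (Suc i) col)
           (\<lambda>col'. exp (- l * card (homochromatic (Suc i) col' c))) * ind i col"
    using assms(2,3,7) colour_step_support_finite[of "Suc i" col a]
    by (subst integral_mult_left_zero[symmetric], intro expectation_pmf_mono) (auto intro: mult_left_mono)
  also have "\<dots> \<le> exp (- l * card (homochromatic i col c)) * ind i col *
                   exp (- (1 - exp (- l)) * (1 - sec_p a (Suc i)) / \<kappa>)"
  proof (cases "card (seeds i col) \<le> \<kappa> \<and> col c = c")
    case True
    then have "c \<in> seeds i col"
      using assms(3-5) by (simp add: seeds_def)
    then show ?thesis
      using True assms one_plus_join_prob_le_neg[of a "Suc i" l c col \<kappa>]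
        expectation_exp_card_homochromatic_step[of a "Suc i" col "- l" c]
      by (simp add: ind_def)
  qed (auto simp: ind_def)
  finally show ?thesis .
qed

lemma expectation_exp_neg_card_homochromatic_le:
  fixes l \<kappa> :: real
  assumes "0 < a" "2 \<le> m" "1 \<le> c" "c \<le> m" "m \<le> n" "0 \<le> l"
  shows "measure_pmf.expectation (colour_model a n)
           (\<lambda>col. exp (- l * card (homochromatic n col c)) * (of_bool (card (seeds n col) \<le> \<kappa>) *
                  of_bool (col c = c)))
         \<le> exp (- (1 - exp (- l)) * (\<Sum>j\<in>{m<..n}. 1 - sec_p a j) / \<kappa>)"
proof -
  let ?f = "\<lambda>i col. exp (- l * card (homochromatic i col c)) *
              (of_bool (card (seeds i col) \<le> \<kappa>) * of_bool (col c = c) :: real)"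
  let ?h = "\<lambda>i. - (1 - exp (- l)) * (1 - sec_p a i) / \<kappa>"
  have "measure_pmf.expectation (colour_model a n) (?f n) \<le> exp (\<Sum>i\<in>{m<..n}. ?h i)"
  proof (rule expectation_colour_model_le_exp_sum_from_le_1[OF assms(2,5)])
    show "?f m col \<le> 1" for col
      using assms(6) by simp
    show "measure_pmf.expectation (colour_step a (Suc i) col) (?f (Suc i)) \<le> ?f i col * exp (?h (Suc i))"
      if "m \<le> i" "col \<in> set_pmf (colour_model a i)" for i col
      using admissible_colouring_colour_model[OF that(2)] assms that(1)
        expectation_exp_neg_card_homochromatic_step_le[of a m i c l col \<kappa>]
      by (auto simp: admissible_colouring_def)
  qed
  also have "(\<Sum>i\<in>{m<..n}. ?h i) = - (1 - exp (- l)) * (\<Sum>j\<in>{m<..n}. 1 - sec_p a j) / \<kappa>"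
    by (simp add: sum_distrib_left sum_divide_distrib)
  finally show ?thesis .
qed

section \<open>Tail bounds\<close>

lemma prob_card_seeds_gt_le:
  fixes t \<kappa> :: real
  assumes "0 < a" "2 \<le> n" "0 < t"
  shows "measure_pmf.prob (colour_model a n) {col. \<kappa> < card (seeds n col)}
     \<le> exp (2 * t + (exp t - 1) * (\<Sum>j\<in>{2<..n}. sec_p a j) - t * \<kappa>)"
proof -
  have "measure_pmf.prob (colour_model a n) {col. \<kappa> < card (seeds n col)}
      \<le> measure_pmf.expectation (colour_model a n) (\<lambda>col. exp (t * card (seeds n col)) * exp (- t * \<kappa>))"
    using assms(3)
    by (intro prob_le_expectation_pmf colour_model_support_finite) (simp_all add: exp_add[symmetric])
  also have "\<dots> \<le> exp (2 * t + (exp t - 1) * (\<Sum>j\<in>{2<..n}. sec_p a j)) * exp (- t * \<kappa>)"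
    using expectation_exp_card_seeds_le[OF assms(1,2), of t] by simp
  finally show ?thesis by (simp add: exp_add[symmetric])
qed

lemma prob_card_seeds_lt_le:
  fixes t \<kappa> :: real
  assumes "0 < a" "2 \<le> m" "m \<le> n" "0 < t"
  shows "measure_pmf.prob (colour_model a n) {col. card (seeds m col) < \<kappa>}
     \<le> exp (- 2 * t + (exp (- t) - 1) * (\<Sum>j\<in>{2<..m}. sec_p a j) + t * \<kappa>)"
proof -
  have "measure_pmf.prob (colour_model a n) {col. card (seeds m col) < \<kappa>} =
        measure_pmf.prob (colour_model a m) {col. card (seeds m col) < \<kappa>}"
    using expectation_colour_model_past[OF assms(2,3), of "indicator {col. card (seeds m col) < \<kappa>}" a]
    by (simp add: seeds_fun_upd_less indicator_def)
  also have "\<dots> \<le> measure_pmf.expectation (colour_model a m)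
                   (\<lambda>col. exp (- t * card (seeds m col)) * exp (t * \<kappa>))"
    using assms(4)
    by (intro prob_le_expectation_pmf colour_model_support_finite) (simp_all add: exp_add[symmetric])
  also have "\<dots> \<le> exp (2 * (- t) + (exp (- t) - 1) * (\<Sum>j\<in>{2<..m}. sec_p a j)) * exp (t * \<kappa>)"
    using expectation_exp_card_seeds_le[OF assms(1,2), of "- t"] by simp
  finally show ?thesis by (simp add: exp_add[symmetric])
qed

lemma prob_card_homochromatic_lt_le:
  fixes L \<kappa> :: real
  assumes "0 < a" "2 \<le> m" "1 \<le> c" "c \<le> m" "m \<le> n"
  shows "measure_pmf.prob (colour_model a n)
           {col. col c = c \<and> card (homochromatic n col c) < L \<and> card (seeds n col) \<le> \<kappa>}
     \<le> exp (L - (1 - exp (- 1)) * (\<Sum>j\<in>{m<..n}. 1 - sec_p a j) / \<kappa>)"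
proof -
  have "measure_pmf.prob (colour_model a n)
          {col. col c = c \<and> card (homochromatic n col c) < L \<and> card (seeds n col) \<le> \<kappa>}
      \<le> measure_pmf.expectation (colour_model a n)
          (\<lambda>col. exp (- 1 * card (homochromatic n col c)) * (of_bool (card (seeds n col) \<le> \<kappa>) *
                 of_bool (col c = c)) * exp L)"
    by (intro prob_le_expectation_pmf colour_model_support_finite) (auto simp: exp_add[symmetric])
  also have "\<dots> \<le> exp (- (1 - exp (- 1)) * (\<Sum>j\<in>{m<..n}. 1 - sec_p a j) / \<kappa>) * exp L"
    using expectation_exp_neg_card_homochromatic_le[OF assms, of 1 \<kappa>] by simp
  finally show ?thesis by (simp add: exp_add[symmetric] algebra_simps diff_divide_distrib)
qed

lemma prob_card_homochromatic_gt_le: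
  fixes T \<kappa> :: real
  assumes "0 < a" "2 \<le> m" "m < c" "m \<le> n" "0 < \<kappa>"
  shows "measure_pmf.prob (colour_model a n)
           {col. T < card (homochromatic n col c) \<and> \<kappa> \<le> card (seeds m col)}
     \<le> exp (1 + (exp 1 - 1) * real (n - m) / \<kappa> - T)"
proof -
  have "measure_pmf.prob (colour_model a n)
          {col. T < card (homochromatic n col c) \<and> \<kappa> \<le> card (seeds m col)}
      \<le> measure_pmf.expectation (colour_model a n)
          (\<lambda>col. exp (1 * card (homochromatic n col c)) * of_bool (\<kappa> \<le> card (seeds m col)) * exp (- T))"
    by (intro prob_le_expectation_pmf colour_model_support_finite) (auto simp: exp_add[symmetric])
  also have "\<dots> \<le> exp (1 + (exp 1 - 1) * real (n - m) / \<kappa>) * exp (- T)"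
    using expectation_exp_card_homochromatic_le[OF assms(1-4) _ assms(5), of 1] by simp
  finally show ?thesis by (simp add: exp_add[symmetric])
qed

section \<open>The regime of large n\<close>

definition seed_scale :: "real \<Rightarrow> nat \<Rightarrow> real" where
  "seed_scale a n = real n * ln (real n) powr (- a)"

lemma sum_sec_p_ge:
  assumes "0 < a" "m \<le> n"
  shows "(real m - 2) * ln (real n) powr (- a) \<le> (\<Sum>j\<in>{2<..m}. sec_p a j)"
proof -
  have "(\<Sum>j\<in>{2<..m}. ln (real n) powr (- a)) \<le> (\<Sum>j\<in>{2<..m}. sec_p a j)"
  proof (rule sum_mono)
    fix j assume j: "j \<in> {2<..m}"
    then have "1 \<le> ln (real j)" "ln (real j) \<le> ln (real n)"
      using one_le_ln_nat[of j] assms(2) by auto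
    then show "ln (real n) powr (- a) \<le> sec_p a j"
      unfolding sec_p_def using assms(1) by (intro powr_mono2') auto
  qed
  moreover have "(real m - 2) * ln (real n) powr (- a) \<le> real (card {2<..m}) * ln (real n) powr (- a)"
    by (intro mult_right_mono) auto
  ultimately show ?thesis by simp
qed

text \<open>Split at j = n powr \<theta>: the early terms are at most 1 each, the late ones at most
  (\<theta> ln n) powr (-a) each.\<close>
lemma sum_sec_p_le:
  assumes "0 < a" "0 < \<theta>" "\<theta> < 1" "3 \<le> n"
  shows "(\<Sum>j\<in>{2<..n}. sec_p a j) \<le> real n powr \<theta> + \<theta> powr (- a) * seed_scale a n"
proof -
  let ?x = "real n powr \<theta>" and ?L = "ln (real n)"
  define A where "A = {j\<in>{2<..n}. real j \<le> ?x}"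
  define B where "B = {j\<in>{2<..n}. ?x < real j}"
  have "(\<Sum>j\<in>A. sec_p a j) \<le> real (card A)"
    using sec_p_le_1[OF assms(1)] sum_mono[of A "sec_p a" "\<lambda>_. 1"] by (simp add: A_def)
  also have "\<dots> \<le> ?x"
  proof -
    have "A \<subseteq> {1..nat \<lfloor>?x\<rfloor>}"
      by (auto simp: A_def le_nat_floor)
    then have "card A \<le> nat \<lfloor>?x\<rfloor>"
      using card_mono[of "{1..nat \<lfloor>?x\<rfloor>}" A] by simp
    then have "real (card A) \<le> real (nat \<lfloor>?x\<rfloor>)"
      by (rule of_nat_mono)
    then show ?thesis using of_nat_floor[of ?x] by (simp add: order_trans)
  qed
  finally have sum_A: "(\<Sum>j\<in>A. sec_p a j) \<le> ?x" .
  have "sec_p a j \<le> (\<theta> * ?L) powr (- a)" if "j \<in> B" for j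
  proof -
    have "\<theta> * ?L = ln ?x" using assms(4) by (simp add: ln_powr)
    also have "\<dots> \<le> ln (real j)"
      using that assms(4) by (intro ln_mono) (auto simp: B_def)
    finally show ?thesis
      unfolding sec_p_def using assms by (intro powr_mono2') auto
  qed
  then have "(\<Sum>j\<in>B. sec_p a j) \<le> real (card B) * (\<theta> powr (- a) * ?L powr (- a))"
    using sum_mono[of B "sec_p a" "\<lambda>_. (\<theta> * ?L) powr (- a)"] assms(2,4) by (simp add: powr_mult)
  also have "\<dots> \<le> real n * (\<theta> powr (- a) * ?L powr (- a))"
  proof (rule mult_right_mono)
    have "card B \<le> card {2<..n}"
      by (rule card_mono) (auto simp: B_def)
    then show "real (card B) \<le> real n" by simp
  qed simp
  finally have sum_B: "(\<Sum>j\<in>B. sec_p a j) \<le> \<theta> powr (- a) * seed_scale a n"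
    by (simp add: seed_scale_def algebra_simps)
  have "(\<Sum>j\<in>{2<..n}. sec_p a j) = (\<Sum>j\<in>A. sec_p a j) + (\<Sum>j\<in>B. sec_p a j)"
  proof -
    have "{2<..n} = A \<union> B" "A \<inter> B = {}" "finite A" "finite B"
      by (auto simp: A_def B_def)
    then show ?thesis by (simp add: sum.union_disjoint)
  qed
  then show ?thesis using sum_A sum_B by linarith
qed

lemma exp_one_half_le: "exp (1/2 :: real) \<le> 5/3"
proof (rule ccontr)
  assume "\<not> exp (1/2 :: real) \<le> 5/3"
  then have "(5/3) * (5/3) < exp (1/2 :: real) * exp (1/2)"
    by (intro mult_strict_mono) auto
  also have "\<dots> = exp 1"
    by (simp add: exp_add[symmetric])
  finally show False
    using e_less_272 by simp
qed

lemma exp_minus_one_le: "exp (- 1 :: real) \<le> 37/100"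
proof -
  have "271/100 \<le> exp (1 :: real)"
    using e_approx_32 by (simp add: abs_if split: if_splits)
  then show ?thesis
    by (simp add: exp_minus field_simps)
qed

lemma exp_minus_one_fifth_le: "exp (- (1/5) :: real) \<le> 82/100"
proof -
  have "1 + 1/5 + (1/5)\<^sup>2 / 2 \<le> exp (1/5 :: real)"
    by (rule exp_lower_Taylor_quadratic) simp
  then show ?thesis
    by (simp add: exp_minus field_simps power2_eq_square)
qed

definition good_colourings :: "nat \<Rightarrow> nat \<Rightarrow> (nat \<Rightarrow> nat) set" where
  "good_colourings n m = {col. \<forall>c\<in>seeds n col.
     (c \<le> m \<longrightarrow> ln (real n) \<le> card (homochromatic n col c)) \<and>
     (m < c \<longrightarrow> card (homochromatic n col c) \<le> 30 * ln (real n))}"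

definition failure_bound :: "real \<Rightarrow> nat \<Rightarrow> real" where
  "failure_bound a n = exp (1 - seed_scale a n / 5) + exp (- seed_scale a n / 50) +
     real n * exp (- 9/5 * ln (real n)) + real n * exp (1 - 9/2 * ln (real n))"

text \<open>Conditions that hold for all large n with m = nat \<lfloor>T2 a n\<rfloor> (colour_regime_T2):
  seed_scale a n is the order of the number of colours, and the n - m late steps suffice to grow
  the old classes but are too few to grow the young ones.\<close>
locale colour_regime =
  fixes a :: real and n m :: nat
  assumes a_pos: "0 < a" and n_ge_3: "3 \<le> n" and m_ge_2: "2 \<le> m" and m_le_n: "m \<le> n"
    and sum_sec_p_bound: "(\<Sum>j\<in>{2<..n}. sec_p a j) \<le> 6/5 * seed_scale a n"
    and m_large: "19/20 * real n \<le> real m - 2"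
    and sec_p_late_le: "\<And>j. m < j \<Longrightarrow> j \<le> n \<Longrightarrow> sec_p a j \<le> 1/10"
    and late_steps_ge: "10 * ln (real n) * seed_scale a n \<le> real (n - m)"
    and late_steps_le: "real (n - m) \<le> 11 * ln (real n) * seed_scale a n"
begin

lemma ln_n_pos: "0 < ln (real n)"
  using n_ge_3 by simp

lemma seed_scale_pos: "0 < seed_scale a n"
  using n_ge_3 ln_n_pos by (simp add: seed_scale_def)

lemma prob_many_seeds:
  "measure_pmf.prob (colour_model a n) {col. 2 * seed_scale a n < card (seeds n col)}
     \<le> exp (1 - seed_scale a n / 5)"
proof -
  have "0 \<le> (\<Sum>j\<in>{2<..n}. sec_p a j)"
    by (simp add: sum_nonneg sec_p_nonneg)
  then have "(exp (1/2) - 1) * (\<Sum>j\<in>{2<..n}. sec_p a j) \<le> 2/3 * (6/5 * seed_scale a n)"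
    using exp_one_half_le sum_sec_p_bound by (intro mult_mono) auto
  then have "exp (2 * (1/2) + (exp (1/2) - 1) * (\<Sum>j\<in>{2<..n}. sec_p a j) - 1/2 * (2 * seed_scale a n))
      \<le> exp (1 - seed_scale a n / 5)"
    by simp
  then show ?thesis
    using prob_card_seeds_gt_le[OF a_pos, of n "1/2" "2 * seed_scale a n"] n_ge_3 by linarith
qed

lemma prob_few_seeds:
  "measure_pmf.prob (colour_model a n) {col. card (seeds m col) < 3/4 * seed_scale a n}
     \<le> exp (- seed_scale a n / 50)"
proof -
  have "19/20 * seed_scale a n \<le> (real m - 2) * ln (real n) powr (- a)"
    using mult_right_mono[OF m_large, of "ln (real n) powr (- a)"] by (simp add: seed_scale_def)
  then have "19/20 * seed_scale a n \<le> (\<Sum>j\<in>{2<..m}. sec_p a j)"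
    using sum_sec_p_ge[OF a_pos m_le_n] by linarith
  moreover have "(exp (- (1/5)) - 1) * (\<Sum>j\<in>{2<..m}. sec_p a j) \<le> - 18/100 * (\<Sum>j\<in>{2<..m}. sec_p a j)"
    using exp_minus_one_fifth_le by (intro mult_right_mono) (auto simp: sum_nonneg sec_p_nonneg)
  ultimately have "(exp (- (1/5)) - 1) * (\<Sum>j\<in>{2<..m}. sec_p a j) \<le> - 18/100 * (19/20 * seed_scale a n)"
    by linarith
  then have "exp (- 2 * (1/5) + (exp (- (1/5)) - 1) * (\<Sum>j\<in>{2<..m}. sec_p a j) + 1/5 * (3/4 * seed_scale a n))
      \<le> exp (- seed_scale a n / 50)"
    using seed_scale_pos by simp
  then show ?thesis
    using prob_card_seeds_lt_le[OF a_pos m_ge_2 m_le_n, of "1/5" "3/4 * seed_scale a n"] by linarith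
qed

lemma prob_small_old_class:
  assumes "1 \<le> c" "c \<le> m"
  shows "measure_pmf.prob (colour_model a n)
           {col. col c = c \<and> card (homochromatic n col c) < ln (real n) \<and>
                 card (seeds n col) \<le> 2 * seed_scale a n}
         \<le> exp (- 9/5 * ln (real n))"
proof -
  let ?S = "\<Sum>j\<in>{m<..n}. 1 - sec_p a j"
  have "9/10 * real (n - m) \<le> ?S"
    using sec_p_late_le sum_mono[of "{m<..n}" "\<lambda>_. 9/10 :: real" "\<lambda>j. 1 - sec_p a j"] by force
  then have "9 * ln (real n) * seed_scale a n \<le> ?S"
    using late_steps_ge by linarith
  moreover have "63/100 \<le> 1 - exp (- 1 :: real)"
    using exp_minus_one_le by simp
  ultimately have "63/100 * (9 * ln (real n) * seed_scale a n) \<le> (1 - exp (- 1)) * ?S"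
    using ln_n_pos seed_scale_pos by (intro mult_mono) auto
  then have "567/200 * ln (real n) \<le> (1 - exp (- 1)) * ?S / (2 * seed_scale a n)"
    using seed_scale_pos by (simp add: field_simps)
  then have "exp (ln (real n) - (1 - exp (- 1)) * ?S / (2 * seed_scale a n)) \<le> exp (- 9/5 * ln (real n))"
    using ln_n_pos by simp
  then show ?thesis
    using prob_card_homochromatic_lt_le[OF a_pos m_ge_2 assms m_le_n, of "ln (real n)" "2 * seed_scale a n"]
    by linarith
qed

lemma prob_large_young_class:
  assumes "m < c"
  shows "measure_pmf.prob (colour_model a n)
           {col. 30 * ln (real n) < card (homochromatic n col c) \<and> 3/4 * seed_scale a n \<le> card (seeds m col)}
         \<le> exp (1 - 9/2 * ln (real n))"
proof -
  have "(exp 1 - 1) * real (n - m) \<le> 172/100 * (11 * ln (real n) * seed_scale a n)"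
    using e_less_272 late_steps_le by (intro mult_mono) auto
  then have "(exp 1 - 1) * real (n - m) / (3/4 * seed_scale a n) \<le> 7568/300 * ln (real n)"
    using seed_scale_pos by (simp add: field_simps)
  then have "exp (1 + (exp 1 - 1) * real (n - m) / (3/4 * seed_scale a n) - 30 * ln (real n))
      \<le> exp (1 - 9/2 * ln (real n))"
    using ln_n_pos by simp
  then show ?thesis
    using prob_card_homochromatic_gt_le[OF a_pos m_ge_2 assms m_le_n, of "3/4 * seed_scale a n"
        "30 * ln (real n)"] seed_scale_pos
    by linarith
qed

lemma prob_not_good_colourings:
  "measure_pmf.prob (colour_model a n) (- good_colourings n m) \<le> failure_bound a n"
proof -
  let ?P = "measure_pmf.prob (colour_model a n)" and ?L = "ln (real n)" and ?Y = "seed_scale a n"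
  define A1 where "A1 = {col. 2 * ?Y < card (seeds n col)}"
  define A2 where "A2 = {col. card (seeds m col) < 3/4 * ?Y}"
  define B1 where "B1 c = {col. col c = c \<and> card (homochromatic n col c) < ?L \<and> card (seeds n col) \<le> 2 * ?Y}"
    for c
  define B2 where "B2 c = {col. 30 * ?L < card (homochromatic n col c) \<and> 3/4 * ?Y \<le> card (seeds m col)}"
    for c
  have "- good_colourings n m \<subseteq> (A1 \<union> A2) \<union> ((\<Union>c\<in>{1..m}. B1 c) \<union> (\<Union>c\<in>{m<..n}. B2 c))"
    by (auto simp: good_colourings_def seeds_def A1_def A2_def B1_def B2_def not_le not_less)
  then have "?P (- good_colourings n m) \<le> ?P (A1 \<union> A2) + ?P ((\<Union>c\<in>{1..m}. B1 c) \<union> (\<Union>c\<in>{m<..n}. B2 c))"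
    by (intro order_trans[OF measure_pmf.finite_measure_mono measure_Un_le]) auto
  also have "\<dots> \<le> (?P A1 + ?P A2) + ((\<Sum>c\<in>{1..m}. ?P (B1 c)) + (\<Sum>c\<in>{m<..n}. ?P (B2 c)))"
    by (intro add_mono order_trans[OF measure_Un_le] measure_pmf.finite_measure_subadditive_finite) auto
  also have "\<dots> \<le> (exp (1 - ?Y / 5) + exp (- ?Y / 50)) +
                  ((\<Sum>c\<in>{1..m}. exp (- 9/5 * ?L)) + (\<Sum>c\<in>{m<..n}. exp (1 - 9/2 * ?L)))"
    unfolding A1_def A2_def B1_def B2_def
    using prob_many_seeds prob_few_seeds prob_small_old_class prob_large_young_class
    by (intro add_mono sum_mono) auto
  also have "\<dots> \<le> failure_bound a n"
    using m_le_n by (simp add: failure_bound_def add_mono mult_right_mono)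
  finally show ?thesis .
qed

end

lemma delta1_mult_eq:
  assumes "3 \<le> n"
  shows "delta1 a n * real n = 10 * ln (real n) * seed_scale a n"
proof -
  have "0 < ln (real n)" using assms by simp
  then have "1 / ln (real n) powr (a - 1) = ln (real n) * ln (real n) powr (- a)"
    by (simp add: powr_diff powr_minus field_simps)
  then have "delta1 a n = 10 * (ln (real n) * ln (real n) powr (- a))"
    by (simp add: delta1_def)
  then show ?thesis
    by (simp add: seed_scale_def)
qed

lemma T2_bounds:
  assumes "delta1 a n \<le> 1/40"
  shows "39/40 * real n \<le> T2 a n" "T2 a n \<le> real n"
proof -
  have "0 \<le> delta1 a n" by (simp add: delta1_def)
  then show "39/40 * real n \<le> T2 a n" "T2 a n \<le> real n"
    using mult_right_mono[OF assms, of "real n"] mult_right_mono[of 0 "delta1 a n" "real n"]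
    by (auto simp: T2_def algebra_simps)
qed

text \<open>\<theta> is chosen so that \<theta> powr (-a) = 21/20 in sum_sec_p_le.\<close>
lemma sum_sec_p_le_seed_scale:
  assumes "1 < a" "3 \<le> n" "real n powr ((21/20) powr (- 1/a)) < 3/20 * seed_scale a n"
  shows "(\<Sum>j\<in>{2<..n}. sec_p a j) \<le> 6/5 * seed_scale a n"
proof -
  define \<theta> where "\<theta> = (21/20 :: real) powr (- 1/a)"
  have "0 < \<theta>" "\<theta> < 1" and \<theta>: "\<theta> powr (- a) = 21/20"
    using assms(1) by (auto simp: \<theta>_def powr_powr intro: powr_less_one)
  then have "(\<Sum>j\<in>{2<..n}. sec_p a j) \<le> real n powr \<theta> + 21/20 * seed_scale a n"
    using sum_sec_p_le[of a \<theta> n] assms(1,2) unfolding \<theta> by simp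
  moreover have "real n powr \<theta> < 3/20 * seed_scale a n"
    using assms(3) by (simp add: \<theta>_def)
  ultimately show ?thesis by linarith
qed

lemma colour_regime_T2:
  assumes "1 < a" "200 \<le> n" "delta1 a n \<le> 1/40" "1 \<le> seed_scale a n"
    and "ln (real n / 2) powr (- a) < 1/10"
    and "real n powr ((21/20) powr (- 1/a)) < 3/20 * seed_scale a n"
  shows "colour_regime a n (nat \<lfloor>T2 a n\<rfloor>)"
proof -
  define m where "m = nat \<lfloor>T2 a n\<rfloor>"
  have "real m \<le> T2 a n" "T2 a n < real m + 1"
    using T2_bounds[OF assms(3)] by (simp_all add: m_def)
  with T2_bounds[OF assms(3)] have T2: "39/40 * real n \<le> real m + 1" "real m \<le> real n"
    by linarith+
  have "real (n - m) = delta1 a n * real n + (T2 a n - real m)"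
    using T2(2) by (simp add: T2_def algebra_simps)
  then have n_minus_m: "real (n - m) = 10 * ln (real n) * seed_scale a n + (T2 a n - real m)"
    using delta1_mult_eq[of n a] assms(2) by simp
  have "1 \<le> ln (real n)"
    using one_le_ln_nat[of n] assms(2) by simp
  then have "1 \<le> ln (real n) * seed_scale a n"
    using assms(4) mult_mono[of 1 "ln (real n)" 1 "seed_scale a n"] by simp
  then have "10 * ln (real n) * seed_scale a n \<le> real (n - m)"
    "real (n - m) \<le> 11 * ln (real n) * seed_scale a n"
    using n_minus_m \<open>T2 a n < real m + 1\<close> \<open>real m \<le> T2 a n\<close> by (simp_all add: mult.commute)
  moreover have "sec_p a j \<le> 1/10" if "m < j" "j \<le> n" for j
  proof -
    have "ln (real n / 2) \<le> ln (real j)" "0 < ln (real n / 2)"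
      using that T2 assms(2) by auto
    then show ?thesis
      using assms(1,5) powr_mono2'[of "- a" "ln (real n / 2)" "ln (real j)"] by (simp add: sec_p_def)
  qed
  ultimately show ?thesis
    unfolding m_def[symmetric]
    using assms(1,2) T2 sum_sec_p_le_seed_scale[OF assms(1) _ assms(6)]
    by unfold_locales linarith+
qed

lemma eventually_colour_regime:
  assumes "1 < a"
  shows "\<forall>\<^sub>F n in sequentially. 0 \<le> T2 a n \<and> colour_regime a n (nat \<lfloor>T2 a n\<rfloor>)"
proof -
  have "(\<lambda>n::nat. 10 / ln (real n) powr (a - 1)) \<longlonglongrightarrow> 0"
    using assms by real_asymp
  then have "\<forall>\<^sub>F n in sequentially. delta1 a n < 1/40"
    unfolding delta1_def by (rule order_tendstoD) simp
  moreover have "filterlim (seed_scale a) at_top sequentially"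
    unfolding seed_scale_def using assms by real_asymp
  then have "\<forall>\<^sub>F n in sequentially. 1 \<le> seed_scale a n"
    by (simp add: filterlim_at_top)
  moreover have "(\<lambda>n::nat. ln (real n / 2) powr (- a)) \<longlonglongrightarrow> 0"
    using assms by real_asymp
  then have "\<forall>\<^sub>F n in sequentially. ln (real n / 2) powr (- a) < 1/10"
    by (rule order_tendstoD) simp
  moreover have "(\<lambda>n::nat. real n powr ((21/20) powr (- 1/a)) / seed_scale a n) \<longlonglongrightarrow> 0"
  proof -
    have "(21/20 :: real) powr (- 1/a) < 1"
      using assms by (intro powr_less_one) auto
    then show ?thesis
      unfolding seed_scale_def using assms by real_asymp
  qed
  then have "\<forall>\<^sub>F n in sequentially. real n powr ((21/20) powr (- 1/a)) / seed_scale a n < 3/20"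
    by (rule order_tendstoD) simp
  ultimately show ?thesis
    using eventually_ge_at_top[of 200]
  proof eventually_elim
    case (elim n)
    then have "0 \<le> T2 a n"
      using T2_bounds[of a n] by simp
    moreover have "real n powr ((21/20) powr (- 1/a)) < 3/20 * seed_scale a n"
      using elim by (simp add: divide_less_eq)
    ultimately show ?case
      using elim assms by (simp add: colour_regime_T2)
  qed
qed

lemma failure_bound_tendsto_0: "1 < a \<Longrightarrow> failure_bound a \<longlonglongrightarrow> 0"
  unfolding failure_bound_def seed_scale_def by real_asymp

lemma le_T2_iff:
  assumes "0 \<le> T2 a n"
  shows "real c \<le> T2 a n \<longleftrightarrow> c \<le> nat \<lfloor>T2 a n\<rfloor>"
  using assms by (simp add: le_floor_iff le_nat_iff)

lemma lemma4_event_eq: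
  assumes "0 \<le> T2 a n"
  shows "lemma4_event a n = fst -` good_colourings n (nat \<lfloor>T2 a n\<rfloor>)"
proof -
  have "real c \<le> T2 a n \<longleftrightarrow> c \<le> nat \<lfloor>T2 a n\<rfloor>" "T2 a n < real c \<longleftrightarrow> nat \<lfloor>T2 a n\<rfloor> < c" for c
    using le_T2_iff[OF assms, of c] by auto
  then show ?thesis
    by (auto simp: lemma4_event_def good_colourings_def)
qed

theorem lemma4:
  fixes a :: real and d :: nat
  assumes "a > 1" and "d \<ge> 4"
  shows "(\<lambda>n. measure_pmf.prob (sec_model a d n) (lemma4_event a n)) \<longlonglongrightarrow> 1"
proof (rule tendsto_sandwich)
  show "\<forall>\<^sub>F n in sequentially. 1 - failure_bound a n \<le> measure_pmf.prob (sec_model a d n) (lemma4_event a n)"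
    using eventually_colour_regime[OF assms(1)]
  proof eventually_elim
    case (elim n)
    then interpret colour_regime a n "nat \<lfloor>T2 a n\<rfloor>" by simp
    have "measure_pmf.prob (sec_model a d n) (lemma4_event a n) =
          measure_pmf.prob (colour_model a n) (good_colourings n (nat \<lfloor>T2 a n\<rfloor>))"
      using elim by (simp add: lemma4_event_eq flip: map_fst_sec_model[of a d n])
    also have "\<dots> = 1 - measure_pmf.prob (colour_model a n) (- good_colourings n (nat \<lfloor>T2 a n\<rfloor>))"
      using measure_pmf.prob_compl[of "good_colourings n (nat \<lfloor>T2 a n\<rfloor>)" "colour_model a n"]
      by (simp add: Compl_eq_Diff_UNIV)
    finally show ?case
      using prob_not_good_colourings by linarith
  qed
  show "(\<lambda>n. 1 - failure_bound a n) \<longlonglongrightarrow> 1"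
    using tendsto_diff[OF tendsto_const failure_bound_tendsto_0[OF assms(1)], of 1] by simp
  show "\<forall>\<^sub>F n in sequentially. measure_pmf.prob (sec_model a d n) (lemma4_event a n) \<le> 1"
    by simp
qed simp

end
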